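(* Let $t=1$, let $r_{\max}$ be the maximum requirement of a family, and let $\rho$ be the least common multiple of $\{1,\dots,r_{\max}\}$. If $F'\subseteq F$ is a set of families with $\sum_{f_i\in F'}\boldsymbol{r}_i> r_{\max}(\rho-1)$, then $F'$ contains a homogeneous $\rho$-block.
   Context: There is a single service, so each family $f_i\in F$ has a requirement $\boldsymbol{r}_i\in\mathbb{N}$, and $r_{\max}=\max_{f_i\in F}\boldsymbol{r}_i$. A set $F''\subseteq F$ of families is a homogeneous $\rho$-block if all families in $F''$ have the same requirement and their total requirement equals exactly $\rho$. *)

theory Defs
  imports Main
begin

text \<open>Single service: each family f has a requirement r f :: nat.\<close>

definition homogeneous_block :: "('a \<Rightarrow> nat) \<Rightarrow> nat \<Rightarrow> 'a set \<Rightarrow> bool" where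
  "homogeneous_block r \<rho> B \<longleftrightarrow>
     (\<forall>f\<in>B. \<forall>g\<in>B. r f = r g) \<and> (\<Sum>f\<in>B. r f) = \<rho>"

definition r_max :: "('a \<Rightarrow> nat) \<Rightarrow> 'a set \<Rightarrow> nat" where
  "r_max r F = Max (r ` F)"

end

theory Submission
  imports Defs
begin

text \<open>Split the families by requirement. If no homogeneous \<open>\<rho>\<close>-block exists, then for each
  requirement \<open>v \<in> {1..r\<^sub>m\<^sub>a\<^sub>x}\<close> the families of requirement \<open>v\<close> contribute less than \<open>\<rho>\<close> in
  total, since \<open>v\<close> divides \<open>\<rho>\<close> and \<open>\<rho> / v\<close> of them would form a block. Summing over the
  \<open>r\<^sub>m\<^sub>a\<^sub>x\<close> possible requirements bounds the total requirement by \<open>r\<^sub>m\<^sub>a\<^sub>x (\<rho> - 1)\<close>.\<close>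

lemma homogeneous_block_empty [simp]: "homogeneous_block r 0 {}"
  by (simp add: homogeneous_block_def)

lemma homogeneous_block_const:
  assumes "\<forall>f\<in>B. r f = v" and "card B * v = \<rho>"
  shows "homogeneous_block r \<rho> B"
  using assms by (simp add: homogeneous_block_def)

lemma exists_homogeneous_block_of_requirement:
  assumes "finite A" and "v dvd \<rho>" and "\<rho> \<le> v * card {f\<in>A. r f = v}"
  shows "\<exists>B\<subseteq>A. homogeneous_block r \<rho> B"
proof (cases "v = 0")
  case True
  with assms(2) show ?thesis by auto
next
  case False
  from assms(2) obtain k where k: "\<rho> = v * k" by blast
  with False assms(3) have "k \<le> card {f\<in>A. r f = v}" by simp
  then obtain B where B: "B \<subseteq> {f\<in>A. r f = v}" "card B = k"
    by (meson obtain_subset_with_card_n)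
  then have "homogeneous_block r \<rho> B"
    using k by (intro homogeneous_block_const[where v = v]) auto
  with B(1) show ?thesis by blast
qed

lemma sum_eq_sum_requirement_classes:
  fixes r :: "'a \<Rightarrow> nat"
  assumes "finite A" and "\<forall>f\<in>A. r f \<le> m"
  shows "(\<Sum>f\<in>A. r f) = (\<Sum>v\<in>{1..m}. v * card {f\<in>A. r f = v})"
proof -
  have "(\<Sum>f\<in>A. r f) = (\<Sum>f\<in>{f\<in>A. r f \<noteq> 0}. r f)"
    using assms(1) by (intro sum.mono_neutral_right) auto
  also have "\<dots> = (\<Sum>v\<in>{1..m}. \<Sum>f\<in>{f\<in>{f\<in>A. r f \<noteq> 0}. r f = v}. r f)"
    using assms by (intro sum.group[symmetric]) auto
  also have "\<dots> = (\<Sum>v\<in>{1..m}. v * card {f\<in>A. r f = v})"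
  proof (intro sum.cong refl)
    fix v :: nat
    assume "v \<in> {1..m}"
    then have "{f\<in>{f\<in>A. r f \<noteq> 0}. r f = v} = {f\<in>A. r f = v}"
      by auto
    then show "(\<Sum>f\<in>{f\<in>{f\<in>A. r f \<noteq> 0}. r f = v}. r f) = v * card {f\<in>A. r f = v}"
      by simp
  qed
  finally show ?thesis .
qed

lemma exists_homogeneous_block_if_sum_large:
  fixes r :: "'a \<Rightarrow> nat"
  assumes "finite A" and "\<forall>f\<in>A. r f \<le> m" and "\<forall>v\<in>{1..m}. v dvd \<rho>"
    and "(\<Sum>f\<in>A. r f) > m * (\<rho> - 1)"
  shows "\<exists>B\<subseteq>A. homogeneous_block r \<rho> B"
proof (rule ccontr)
  assume no_block: "\<not> ?thesis"
  have class_small: "v * card {f\<in>A. r f = v} \<le> \<rho> - 1" if "v \<in> {1..m}" for v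
  proof (rule ccontr)
    assume "\<not> ?thesis"
    then have "\<rho> \<le> v * card {f\<in>A. r f = v}"
      by simp
    with assms(1,3) that no_block exists_homogeneous_block_of_requirement show False
      by blast
  qed
  have "(\<Sum>f\<in>A. r f) = (\<Sum>v\<in>{1..m}. v * card {f\<in>A. r f = v})"
    using assms(1,2) by (rule sum_eq_sum_requirement_classes)
  also have "\<dots> \<le> (\<Sum>v\<in>{1..m}. \<rho> - 1)"
    by (intro sum_mono class_small)
  also have "\<dots> = m * (\<rho> - 1)"
    by simp
  finally show False
    using assms(4) by simp
qed

theorem mainTheorem7:
  fixes F :: "'a set" and r :: "'a \<Rightarrow> nat" and F' :: "'a set"
  assumes "finite F" and "F \<noteq> {}"
    and "F' \<subseteq> F"
    and "(\<Sum>f\<in>F'. r f) > r_max r F * (Lcm {1..r_max r F} - 1)"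
  shows "\<exists>B\<subseteq>F'. homogeneous_block r (Lcm {1..r_max r F}) B"
proof (rule exists_homogeneous_block_if_sum_large)
  show "finite F'"
    using assms(1,3) by (rule rev_finite_subset)
  show "\<forall>f\<in>F'. r f \<le> r_max r F"
    using assms(1,3) by (auto simp: r_max_def intro: Max_ge)
  show "\<forall>v\<in>{1..r_max r F}. v dvd Lcm {1..r_max r F}"
    by (simp add: dvd_Lcm)
  show "r_max r F * (Lcm {1..r_max r F} - 1) < (\<Sum>f\<in>F'. r f)"
    by (fact assms(4))
qed

end
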